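(* Let $m\le n$, let $\overline A=(\overline a_{ij})\in\mathbb{R}^{m\times n}$ be arbitrary and $\sigma>0$, and let $A\in\mathbb{R}^{m\times n}$ have independent entries $A_{ij}\sim\mathcal N(\overline a_{ij},\sigma^2)$. Then $$\kappa_F(A)\le 98\sigma^2n^3+2n\|\overline A\|^2+\frac{e^2n^4}{\sigma^2}$$ with probability at least $1-\big(\frac{1}{\sqrt n}+e^{-2n/\pi^2}\big)$.
   Context: $\kappa_F(A)=\|A\|_F^2+\|A^\dagger\|_F^2$, where $A^\dagger$ is the Moore–Penrose pseudoinverse; $\|\overline A\|$ is the spectral (operator) norm. *)

theory Defs
  imports "HOL-Probability.Probability"
begin

definition frob_norm :: "real^'n^'m \<Rightarrow> real" where
  "frob_norm A = sqrt (\<Sum>i\<in>UNIV. \<Sum>j\<in>UNIV. (A $ i $ j)\<^sup>2)"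

definition pinv :: "real^'n^'m \<Rightarrow> real^'m^'n" where
  "pinv A = (THE X. A ** X ** A = A \<and> X ** A ** X = X \<and>
                    transpose (A ** X) = A ** X \<and> transpose (X ** A) = X ** A)"

definition kappa_F :: "real^'n^'m \<Rightarrow> real" where
  "kappa_F A = (frob_norm A)\<^sup>2 + (frob_norm (pinv A))\<^sup>2"

definition spec_norm :: "real^'n^'m \<Rightarrow> real" where
  "spec_norm A = onorm (\<lambda>x. A *v x)"

definition gaussian_matrix :: "real^'n^'m \<Rightarrow> real \<Rightarrow> (real^'n^'m) measure" where
  "gaussian_matrix Abar \<sigma> =
     distr (PiM (UNIV :: ('m \<times> 'n) set)
              (\<lambda>ij. density lborel (normal_density (Abar $ fst ij $ snd ij) \<sigma>)))
           borel (\<lambda>f. \<chi> i j. f (i, j))"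

end

theory Submission
  imports Defs
begin

text \<open>Two events have high probability. First, \<open>norm (A - Abar)\<^sup>2\<close> has mean \<open>m n \<sigma>\<^sup>2\<close>, so
  by Markov's inequality it exceeds \<open>49 \<sigma>\<^sup>2 n\<^sup>3\<close> with probability at most \<open>1/(49 n)\<close>; below that
  level \<open>norm A\<^sup>2 \<le> 2 n (spec_norm Abar)\<^sup>2 + 2 norm (A - Abar)\<^sup>2\<close>. Second, each row \<open>a\<^sub>i\<close> has
  distance at least \<open>\<delta> = \<sigma> / (e n sqrt n)\<close> from the span of the other rows: conditionally on
  those rows a unit normal \<open>u\<close> to their span is fixed (it exists as \<open>m \<le> n\<close>), and
  \<open>a\<^sub>i \<bullet> u\<close> is normal with variance \<open>\<sigma>\<^sup>2\<close>, so it lies in \<open>(-\<delta>, \<delta>)\<close> with probability at most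
  \<open>2 \<delta> / (\<sigma> sqrt (2 pi))\<close>. When all rows are separated, the columns \<open>u\<^sub>i / (a\<^sub>i \<bullet> u\<^sub>i)\<close> form a
  right inverse of \<open>A\<close> of squared Frobenius norm at most \<open>m / \<delta>\<^sup>2\<close>, and \<open>pinv A\<close> is the right
  inverse of least Frobenius norm. The union bound gives failure probability at most
  \<open>1/(49 n) + m 2 \<delta> / (\<sigma> sqrt (2 pi)) \<le> 1 / sqrt n\<close>.\<close>

section \<open>The Moore-Penrose pseudoinverse\<close>

definition penrose :: "real^'n^'m \<Rightarrow> real^'m^'n \<Rightarrow> bool" where
  "penrose A X \<longleftrightarrow> A ** X ** A = A \<and> X ** A ** X = X \<and>
                    transpose (A ** X) = A ** X \<and> transpose (X ** A) = X ** A"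

lemma penrose_unique:
  assumes "penrose A X" "penrose A Y" shows "X = Y"
proof -
  have X: "A ** X ** A = A" "X ** A ** X = X" "transpose (A ** X) = A ** X" "transpose (X ** A) = X ** A"
    and Y: "A ** Y ** A = A" "Y ** A ** Y = Y" "transpose (A ** Y) = A ** Y" "transpose (Y ** A) = Y ** A"
    using assms unfolding penrose_def by auto
  have "X = X ** transpose (A ** X)" using X by (simp add: matrix_mul_assoc)
  also have "\<dots> = X ** transpose X ** transpose (A ** Y ** A)"
    using Y by (simp add: matrix_transpose_mul matrix_mul_assoc)
  also have "\<dots> = X ** transpose (A ** X) ** transpose (A ** Y)"
    by (simp add: matrix_transpose_mul matrix_mul_assoc)
  also have "\<dots> = X ** A ** X ** A ** Y" using X Y by (simp add: matrix_mul_assoc)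
  finally have XY: "X = X ** A ** Y" unfolding X(2) .
  have "Y = transpose (Y ** A) ** Y" using Y by (simp add: matrix_mul_assoc)
  also have "\<dots> = transpose (A ** X ** A) ** transpose Y ** Y"
    using X by (simp add: matrix_transpose_mul matrix_mul_assoc)
  also have "\<dots> = transpose (X ** A) ** transpose (Y ** A) ** Y"
    by (simp add: matrix_transpose_mul matrix_mul_assoc)
  also have "\<dots> = X ** A ** (Y ** A ** Y)" using X(4) Y(4) by (simp add: matrix_mul_assoc)
  finally show ?thesis unfolding Y(2) XY[symmetric] by (rule sym)
qed

lemma inner_matrix_vector_mult: "((A::real^'n^'m) *v x) \<bullet> y = x \<bullet> (y v* A)"
  by (metis dot_lmul_matrix inner_commute)

lemma vector_matrix_mult_scaleR:
  fixes A :: "real^'n^'m"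
  shows "(c *\<^sub>R x) v* A = c *\<^sub>R (x v* A)"
  by (metis transpose_matrix_vector matrix_vector_mult_scaleR)

lemma transpose_eq_self_if_self_adjoint:
  fixes M :: "real^'n^'n"
  assumes "\<And>x y. (M *v x) \<bullet> y = x \<bullet> (M *v y)"
  shows "transpose M = M"
proof -
  have column: "(M *v axis j 1) $ i = M $ i $ j" for i j
    by (metis cart_eq_inner_axis matrix_vector_mul_component)
  have "M $ j $ i = M $ i $ j" for i j
    using assms[of "axis i 1" "axis j 1"] by (metis column cart_eq_inner_axis inner_commute)
  then show ?thesis by (simp add: transpose_def vec_eq_iff)
qed

text \<open>\<open>(A *v x) v* A = y v* A\<close> is the normal equation \<open>A\<^sup>T A x = A\<^sup>T y\<close>, written with \<open>v*\<close>
  because the simplifier normalises \<open>transpose A *v x\<close> to \<open>x v* A\<close>.\<close>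
lemma matrix_vector_mult_eq_0_if_normal:
  fixes A :: "real^'n^'m"
  assumes "(A *v x) v* A = 0"
  shows "A *v x = 0"
proof -
  have "(A *v x) \<bullet> (A *v x) = 0"
    using assms by (simp add: inner_matrix_vector_mult)
  then show ?thesis by simp
qed

lemma normal_equation_solvable:
  fixes A :: "real^'n^'m"
  shows "\<exists>x. (A *v x) v* A = y v* A"
proof -
  obtain a b where a: "a \<in> span (range (\<lambda>x. A *v x))"
    and b: "\<And>v. v \<in> span (range (\<lambda>x. A *v x)) \<Longrightarrow> orthogonal b v" and y: "y = a + b"
    using orthogonal_subspace_decomp_exists by blast
  have "subspace (range (\<lambda>x. A *v x))"
    by (simp add: linear_subspace_image)
  then obtain x where x: "a = A *v x" using a by (metis span_eq_iff imageE)
  have "(b v* A) \<bullet> (b v* A) = 0"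
    using b[of "A *v (b v* A)"] by (simp add: span_base orthogonal_def dot_lmul_matrix)
  then have "b v* A = 0" by simp
  then show ?thesis by (auto simp: x y vector_matrix_left_distrib)
qed

text \<open>The least-squares solution of \<open>A x = y\<close> in the row space of \<open>A\<close>; it is \<open>pinv A *v y\<close>.\<close>
definition min_norm_lsq :: "real^'n^'m \<Rightarrow> real^'m \<Rightarrow> real^'n" where
  "min_norm_lsq A y = (THE v. v \<in> range (\<lambda>w. w v* A) \<and> (A *v v) v* A = y v* A)"

lemma normal_equation_unique_in_row_space:
  fixes A :: "real^'n^'m"
  assumes "(A *v (w v* A)) v* A = (A *v (w' v* A)) v* A"
  shows "w v* A = w' v* A"
proof -
  define d where "d = (w - w') v* A"
  have "(A *v d) v* A = 0"
    using assms by (simp add: d_def vector_matrix_mult_diff_distrib matrix_vector_mult_diff_distrib)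
  then have "A *v d = 0" by (rule matrix_vector_mult_eq_0_if_normal)
  then have "d \<bullet> d = 0"
    unfolding d_def by (simp add: dot_lmul_matrix)
  then show ?thesis by (simp add: d_def vector_matrix_mult_diff_distrib)
qed

lemma min_norm_lsq:
  fixes A :: "real^'n^'m"
  shows "min_norm_lsq A y \<in> range (\<lambda>w. w v* A)"
    and "(A *v min_norm_lsq A y) v* A = y v* A"
proof -
  obtain x where x: "(A *v x) v* A = y v* A"
    using normal_equation_solvable by blast
  obtain w where "(transpose A *v w) v* transpose A = x v* transpose A"
    using normal_equation_solvable by blast
  then have "(A *v (w v* A)) v* A = y v* A"
    using x by simp
  then have "\<exists>!v. v \<in> range (\<lambda>w. w v* A) \<and> (A *v v) v* A = y v* A"
    by (auto intro: normal_equation_unique_in_row_space)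
  then have "min_norm_lsq A y \<in> range (\<lambda>w. w v* A) \<and> (A *v min_norm_lsq A y) v* A = y v* A"
    unfolding min_norm_lsq_def by (rule theI')
  then show "min_norm_lsq A y \<in> range (\<lambda>w. w v* A)" "(A *v min_norm_lsq A y) v* A = y v* A"
    by auto
qed

lemma min_norm_lsq_eqI:
  fixes A :: "real^'n^'m"
  assumes "(A *v (w v* A)) v* A = y v* A"
  shows "min_norm_lsq A y = w v* A"
proof -
  obtain w' where w': "min_norm_lsq A y = w' v* A" using min_norm_lsq(1) by blast
  then have "(A *v (w' v* A)) v* A = (A *v (w v* A)) v* A"
    using min_norm_lsq(2)[of A y] assms by simp
  then have "w' v* A = w v* A" by (rule normal_equation_unique_in_row_space)
  with w' show ?thesis by simp
qed

lemma linear_min_norm_lsq: "linear (min_norm_lsq A)"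
proof (rule linearI)
  fix y z
  obtain v w where "min_norm_lsq A y = v v* A" "min_norm_lsq A z = w v* A"
    using min_norm_lsq(1) by blast
  moreover have "min_norm_lsq A (y + z) = (v + w) v* A"
    using min_norm_lsq(2)[of A y] min_norm_lsq(2)[of A z] calculation
    by (intro min_norm_lsq_eqI) (simp add: vector_matrix_left_distrib matrix_vector_right_distrib)
  ultimately show "min_norm_lsq A (y + z) = min_norm_lsq A y + min_norm_lsq A z"
    by (simp add: vector_matrix_left_distrib)
next
  fix c y
  obtain v where "min_norm_lsq A y = v v* A"
    using min_norm_lsq(1) by blast
  moreover have "min_norm_lsq A (c *\<^sub>R y) = (c *\<^sub>R v) v* A"
    using min_norm_lsq(2)[of A y] calculation
    by (intro min_norm_lsq_eqI) (simp add: vector_matrix_mult_scaleR matrix_vector_mult_scaleR)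
  ultimately show "min_norm_lsq A (c *\<^sub>R y) = c *\<^sub>R min_norm_lsq A y"
    by (simp add: vector_matrix_mult_scaleR)
qed

lemma penrose_matrix_min_norm_lsq:
  fixes A :: "real^'n^'m"
  shows "penrose A (matrix (min_norm_lsq A))"
proof -
  define g where "g = min_norm_lsq A"
  define X where "X = matrix g"
  have X: "X *v y = g y" for y
    unfolding X_def g_def by (simp add: linear_min_norm_lsq)
  have normal: "(A *v g y) v* A = y v* A" for y
    unfolding g_def by (rule min_norm_lsq(2))
  have row_space: "g y \<in> range (\<lambda>w. w v* A)" for y
    unfolding g_def by (rule min_norm_lsq(1))
  have AgA: "A *v g (A *v x) = A *v x" for x
  proof -
    have "(A *v (g (A *v x) - x)) v* A = 0"
      using normal[of "A *v x"] by (simp add: matrix_vector_mult_diff_distrib vector_matrix_mult_diff_distrib)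
    then have "A *v (g (A *v x) - x) = 0" by (rule matrix_vector_mult_eq_0_if_normal)
    then show ?thesis by (simp add: matrix_vector_mult_diff_distrib)
  qed
  have gAg: "g (A *v g y) = g y" for y
    using row_space[of y] unfolding g_def by (auto intro: min_norm_lsq_eqI)
  have "A ** X ** A = A"
    by (simp add: matrix_eq matrix_vector_mul_assoc[symmetric] X AgA)
  moreover have "X ** A ** X = X"
    by (simp add: matrix_eq matrix_vector_mul_assoc[symmetric] X gAg)
  moreover have "transpose (A ** X) = A ** X"
  proof (rule transpose_eq_self_if_self_adjoint)
    have AX: "(A *v g y) \<bullet> z = (A *v g y) \<bullet> (A *v g z)" for y z
    proof -
      have "(A *v g y) \<bullet> (z - A *v g z) = g y \<bullet> (z v* A - (A *v g z) v* A)"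
        by (simp add: inner_diff_right vector_matrix_mult_diff_distrib inner_matrix_vector_mult)
      then show ?thesis by (simp add: normal inner_diff_right)
    qed
    fix y z
    show "((A ** X) *v y) \<bullet> z = y \<bullet> ((A ** X) *v z)"
      using AX[of y z] AX[of z y] by (simp add: matrix_vector_mul_assoc[symmetric] X inner_commute)
  qed
  moreover have "transpose (X ** A) = X ** A"
  proof (rule transpose_eq_self_if_self_adjoint)
    have XA: "g (A *v y) \<bullet> z = g (A *v y) \<bullet> g (A *v z)" for y z
    proof -
      obtain w where w: "g (A *v y) = w v* A" using row_space by blast
      have "A *v (z - g (A *v z)) = 0" using AgA[of z] by (simp add: matrix_vector_mult_diff_distrib)
      then have "g (A *v y) \<bullet> (z - g (A *v z)) = 0" by (simp add: w dot_lmul_matrix)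
      then show ?thesis by (simp add: inner_diff_right)
    qed
    fix y z
    show "((X ** A) *v y) \<bullet> z = y \<bullet> ((X ** A) *v z)"
      using XA[of y z] XA[of z y] by (simp add: matrix_vector_mul_assoc[symmetric] X inner_commute)
  qed
  ultimately show ?thesis unfolding penrose_def X_def g_def by blast
qed

lemma pinv_eqI: "penrose A X \<Longrightarrow> pinv A = X"
  unfolding pinv_def by (rule the_equality) (auto simp: penrose_def[symmetric] intro: penrose_unique)

lemma penrose_pinv: "penrose A (pinv A)"
  using pinv_eqI penrose_matrix_min_norm_lsq by metis

section \<open>Frobenius norm bounds\<close>

lemma norm_vec_sq: "(norm (x::real^'n))\<^sup>2 = (\<Sum>i\<in>UNIV. (x $ i)\<^sup>2)"
  by (simp add: norm_vec_def L2_set_def sum_nonneg)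

lemma frob_norm_eq_norm: "frob_norm A = norm A"
  unfolding frob_norm_def norm_vec_def L2_set_def by (simp add: sum_nonneg)

lemma norm_matrix_sq: "(norm (A::real^'n^'m))\<^sup>2 = (\<Sum>i\<in>UNIV. \<Sum>j\<in>UNIV. (A $ i $ j)\<^sup>2)"
  unfolding frob_norm_eq_norm[symmetric] frob_norm_def by (simp add: sum_nonneg)

lemma kappa_F_eq_norm: "kappa_F A = (norm A)\<^sup>2 + (norm (pinv A))\<^sup>2"
  unfolding kappa_F_def frob_norm_eq_norm ..

lemma continuous_on_matrix_mult [continuous_intros]:
  fixes f :: "'a::topological_space \<Rightarrow> real^'n^'m" and g :: "'a \<Rightarrow> real^'k^'n"
  assumes "continuous_on S f" "continuous_on S g"
  shows "continuous_on S (\<lambda>x. f x ** g x)"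
  unfolding matrix_matrix_mult_def by (intro continuous_intros assms)

lemma continuous_on_transpose [continuous_intros]:
  fixes f :: "'a::topological_space \<Rightarrow> real^'n^'m"
  assumes "continuous_on S f"
  shows "continuous_on S (\<lambda>x. transpose (f x))"
  unfolding transpose_def by (intro continuous_intros assms)

text \<open>\<open>pinv\<close> is not continuous, but its graph is closed and on a sublevel set of \<open>kappa_F\<close>
  it ranges over a compact set.\<close>
lemma closed_kappa_F_le: "closed {A::real^'n^'m. kappa_F A \<le> c}"
proof -
  define T where "T = {(X::real^'m^'n, A::real^'n^'m). penrose A X \<and> (norm A)\<^sup>2 + (norm X)\<^sup>2 \<le> c}"
  have T: "closed T"
    unfolding T_def penrose_def case_prod_unfold Collect_conj_eq
    by (intro closed_Int closed_Collect_eq closed_Collect_le continuous_intros)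
  have eq: "{A::real^'n^'m. kappa_F A \<le> c} = {A. \<exists>X. X \<in> cball 0 (sqrt \<bar>c\<bar>) \<and> (X, A) \<in> T}"
  proof (intro Collect_cong iffI)
    fix A :: "real^'n^'m" assume "kappa_F A \<le> c"
    then have "(norm A)\<^sup>2 + (norm (pinv A))\<^sup>2 \<le> c" by (simp add: kappa_F_eq_norm)
    moreover from this have "norm (pinv A) \<le> sqrt \<bar>c\<bar>"
      by (intro real_le_rsqrt) (smt (verit) zero_le_power2)
    ultimately show "\<exists>X. X \<in> cball 0 (sqrt \<bar>c\<bar>) \<and> (X, A) \<in> T"
      using penrose_pinv[of A] unfolding T_def by auto
  next
    fix A :: "real^'n^'m" assume "\<exists>X. X \<in> cball 0 (sqrt \<bar>c\<bar>) \<and> (X, A) \<in> T"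
    then show "kappa_F A \<le> c" unfolding T_def by (auto simp: kappa_F_eq_norm pinv_eqI)
  qed
  show ?thesis unfolding eq by (rule closed_compact_projection[OF compact_cball T])
qed

lemma inner_eq_0_if_transpose_mult_eq_0:
  fixes P D :: "real^'n^'m"
  assumes "transpose P ** D = 0"
  shows "P \<bullet> D = 0"
proof -
  have "P \<bullet> D = (\<Sum>i\<in>UNIV. \<Sum>j\<in>UNIV. P $ i $ j * D $ i $ j)"
    by (simp add: inner_vec_def)
  also have "\<dots> = (\<Sum>j\<in>UNIV. (transpose P ** D) $ j $ j)"
    by (subst sum.swap) (simp add: matrix_matrix_mult_def transpose_def)
  finally show ?thesis using assms by simp
qed

text \<open>\<open>pinv A\<close> is the right inverse of minimal Frobenius norm: every other right inverse differs
  from it by a matrix \<open>D\<close> with \<open>A ** D = 0\<close>, which is orthogonal to \<open>pinv A\<close>.\<close>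
lemma norm_pinv_le_right_inverse:
  fixes A :: "real^'n^'m"
  assumes AX: "A ** X = mat 1"
  shows "norm (pinv A) \<le> norm X"
proof -
  define P where "P = pinv A"
  have P: "A ** P ** A = A" "P ** A ** P = P" "transpose (P ** A) = P ** A"
    using penrose_pinv[of A] unfolding penrose_def P_def by auto
  have "A ** P = A ** P ** (A ** X)" using AX by simp
  also have "\<dots> = (A ** P ** A) ** X" by (simp add: matrix_mul_assoc)
  finally have AP: "A ** P = mat 1" using P AX by simp
  define D where "D = X - P"
  have "A ** X = A ** P + A ** D" by (simp add: D_def flip: matrix_add_ldistrib)
  then have AD: "A ** D = 0" using AX AP by simp
  have "transpose P = transpose (P ** A ** P)" using P by simp
  also have "\<dots> = transpose P ** (P ** A)" using P(3) by (simp add: matrix_transpose_mul)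
  finally have "transpose P ** D = transpose P ** P ** (A ** D)" by (metis matrix_mul_assoc)
  then have "P \<bullet> D = 0" using AD by (simp add: inner_eq_0_if_transpose_mult_eq_0)
  then have "(norm X)\<^sup>2 = (norm P)\<^sup>2 + (norm D)\<^sup>2"
    using norm_add_Pythagorean[of P D] by (simp add: D_def orthogonal_def)
  then show ?thesis unfolding P_def by (simp add: power2_le_imp_le)
qed

text \<open>Equivalently, row \<open>i\<close> of \<open>A\<close> has distance at least \<open>\<delta>\<close> from the span of the other rows.\<close>
definition row_separated :: "real \<Rightarrow> 'm \<Rightarrow> real^'n^'m \<Rightarrow> bool" where
  "row_separated \<delta> i A \<longleftrightarrow> (\<exists>u. norm u = 1 \<and> (\<forall>k. k \<noteq> i \<longrightarrow> A $ k \<bullet> u = 0) \<and> \<delta> \<le> \<bar>A $ i \<bullet> u\<bar>)"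

lemma closed_row_separated: "closed {A::real^'n^'m. row_separated \<delta> i A}"
proof -
  define T where "T = {(u::real^'n, A::real^'n^'m). (\<forall>k. k \<noteq> i \<longrightarrow> A $ k \<bullet> u = 0) \<and> \<delta> \<le> \<bar>A $ i \<bullet> u\<bar>}"
  have T: "closed T"
    unfolding T_def case_prod_unfold
    by (intro closed_Collect_conj closed_Collect_all closed_Collect_imp open_Collect_const
          closed_Collect_eq closed_Collect_le continuous_intros)
  have eq: "{A. row_separated \<delta> i A} = {A. \<exists>u. u \<in> sphere 0 1 \<and> (u, A) \<in> T}"
    unfolding row_separated_def T_def by auto
  show ?thesis unfolding eq by (rule closed_compact_projection[OF compact_sphere T])
qed

lemma norm_pinv_sq_le_if_rows_separated:
  fixes A :: "real^'n^'m"
  assumes "\<delta> > 0" and "\<And>i. row_separated \<delta> i A"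
  shows "(norm (pinv A))\<^sup>2 \<le> real CARD('m) / \<delta>\<^sup>2"
proof -
  obtain u where u: "\<And>i. norm (u i) = 1" "\<And>i k. k \<noteq> i \<Longrightarrow> A $ k \<bullet> u i = 0"
      "\<And>i. \<delta> \<le> \<bar>A $ i \<bullet> u i\<bar>"
    using assms(2) unfolding row_separated_def by metis
  define X :: "real^'m^'n" where "X = (\<chi> r c. u c $ r / (A $ c \<bullet> u c))"
  have "(A ** X) $ i $ c = (A $ i \<bullet> u c) / (A $ c \<bullet> u c)" for i c
    by (simp add: X_def matrix_matrix_mult_def inner_vec_def sum_divide_distrib)
  also have "\<dots> i c = (if i = c then 1 else 0)" for i c
    using u(2)[of i c] u(3)[of c] assms(1) by auto
  finally have "A ** X = mat 1" by (simp add: vec_eq_iff mat_def)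
  then have "(norm (pinv A))\<^sup>2 \<le> (norm X)\<^sup>2"
    by (simp add: norm_pinv_le_right_inverse power_mono)
  also have "\<dots> = (\<Sum>c\<in>UNIV. (\<Sum>r\<in>UNIV. (u c $ r)\<^sup>2) / (A $ c \<bullet> u c)\<^sup>2)"
    unfolding norm_matrix_sq X_def by (subst sum.swap) (simp add: power_divide sum_divide_distrib)
  also have "\<dots> = (\<Sum>c\<in>UNIV. 1 / (A $ c \<bullet> u c)\<^sup>2)"
    using u(1) by (simp flip: norm_vec_sq)
  also have "\<dots> \<le> (\<Sum>c\<in>(UNIV::'m set). 1 / \<delta>\<^sup>2)"
  proof (rule sum_mono)
    fix c
    have "\<delta>\<^sup>2 \<le> (A $ c \<bullet> u c)\<^sup>2" using u(3)[of c] assms(1) by (metis abs_le_square_iff abs_of_pos)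
    then show "1 / (A $ c \<bullet> u c)\<^sup>2 \<le> 1 / \<delta>\<^sup>2" using assms(1) by (simp add: frac_le)
  qed
  finally show ?thesis by simp
qed

lemma norm_matrix_sq_le_spec_norm: "(norm (A::real^'n^'m))\<^sup>2 \<le> real CARD('n) * (spec_norm A)\<^sup>2"
proof -
  have "(norm A)\<^sup>2 = (\<Sum>j\<in>UNIV. (norm (column j A))\<^sup>2)"
    unfolding norm_matrix_sq by (subst sum.swap) (simp add: norm_vec_sq column_def)
  also have "\<dots> \<le> (\<Sum>j\<in>(UNIV::'n set). (spec_norm A)\<^sup>2)"
    unfolding spec_norm_def by (intro sum_mono power_mono norm_column_le_onorm) simp
  finally show ?thesis by simp
qed

lemma kappa_F_le_if_rows_separated:
  fixes A Abar :: "real^'n^'m"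
  assumes "\<delta> > 0" and "\<And>i. row_separated \<delta> i A"
  shows "kappa_F A \<le> 2 * real CARD('n) * (spec_norm Abar)\<^sup>2 + 2 * (norm (A - Abar))\<^sup>2
                      + real CARD('m) / \<delta>\<^sup>2"
proof -
  have "(norm A)\<^sup>2 \<le> (norm Abar + norm (A - Abar))\<^sup>2"
    by (metis norm_triangle_sub norm_ge_zero power_mono)
  also have "\<dots> \<le> 2 * (norm Abar)\<^sup>2 + 2 * (norm (A - Abar))\<^sup>2"
    by (smt (verit) zero_le_power2 power2_diff power2_sum)
  finally show ?thesis
    using norm_matrix_sq_le_spec_norm[of Abar] norm_pinv_sq_le_if_rows_separated[OF assms]
    unfolding kappa_F_eq_norm by linarith
qed

lemma exists_unit_orthogonal_to_other_rows:
  fixes A :: "real^'n^'m"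
  assumes "CARD('m) \<le> CARD('n)"
  shows "\<exists>u. norm u = 1 \<and> (\<forall>k. k \<noteq> i \<longrightarrow> A $ k \<bullet> u = 0)"
proof -
  define S where "S = (\<lambda>k. A $ k) ` (UNIV - {i})"
  have "dim S \<le> card S"
    using dim_le_card[of S S] span_superset[of S] unfolding S_def by fastforce
  also have "\<dots> \<le> CARD('m) - 1"
    unfolding S_def using card_image_le[of "UNIV - {i}"] by (simp add: card_Diff_singleton)
  also have "\<dots> < CARD('m)" by simp
  also have "\<dots> \<le> DIM(real^'n)" using assms by simp
  finally have "dim S < DIM(real^'n)" .
  then obtain v where v: "v \<noteq> 0" "\<And>x. x \<in> span S \<Longrightarrow> orthogonal v x"
    using orthogonal_to_subspace_exists by blast
  have "A $ k \<bullet> v = 0" if "k \<noteq> i" for k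
    using v(2)[of "A $ k"] that by (auto simp: S_def span_base orthogonal_def inner_commute)
  then show ?thesis
    using v(1) by (intro exI[of _ "v /\<^sub>R norm v"]) auto
qed

section \<open>Independent normal coordinates\<close>

lemma (in prob_space) prob_ge_1_minus_union_bound:
  assumes "finite I" "S \<in> events" "B \<in> events" "\<And>i. i \<in> I \<Longrightarrow> C i \<in> events"
    and "space M - S \<subseteq> B \<union> (\<Union>i\<in>I. C i)"
  shows "1 - (prob B + (\<Sum>i\<in>I. prob (C i))) \<le> prob S"
proof -
  have "prob (space M - S) \<le> prob (B \<union> (\<Union>i\<in>I. C i))"
    using assms by (intro finite_measure_mono) auto
  also have "\<dots> \<le> prob B + prob (\<Union>i\<in>I. C i)"
    using assms by (intro measure_subadditive) auto
  also have "prob (\<Union>i\<in>I. C i) \<le> (\<Sum>i\<in>I. prob (C i))"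
    using assms by (intro finite_measure_subadditive_finite) auto
  finally show ?thesis using prob_compl[OF assms(2)] by simp
qed

lemma emeasure_PiM_le_if_sections_le:
  assumes "\<And>k. prob_space (N k)" "I \<inter> J = {}" "finite I" "finite J"
    and "A \<in> sets (PiM (I \<union> J) N)"
    and "\<And>x. x \<in> space (PiM I N) \<Longrightarrow>
           emeasure (PiM J N) ((\<lambda>y. merge I J (x, y)) -` A \<inter> space (PiM J N)) \<le> c"
  shows "emeasure (PiM (I \<union> J) N) A \<le> c"
proof -
  interpret product_sigma_finite N
    using assms(1) by (simp add: product_sigma_finite_def prob_space_imp_sigma_finite)
  interpret I: prob_space "PiM I N"
    using assms(1) by (rule prob_space_PiM)
  have "emeasure (PiM (I \<union> J) N) A
      = (\<integral>\<^sup>+x. emeasure (PiM J N) ((\<lambda>y. merge I J (x, y)) -` A \<inter> space (PiM J N)) \<partial>PiM I N)"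
    using assms(2-5) by (rule emeasure_fold_integral)
  also have "\<dots> \<le> (\<integral>\<^sup>+x. c \<partial>PiM I N)"
    using assms(6) by (intro nn_integral_mono) auto
  also have "\<dots> = c"
    by (simp add: I.emeasure_space_1)
  finally show ?thesis .
qed

definition indep_normals :: "'a set \<Rightarrow> ('a \<Rightarrow> real) \<Rightarrow> real \<Rightarrow> ('a \<Rightarrow> real) measure" where
  "indep_normals I \<mu> \<sigma> = PiM I (\<lambda>k. density lborel (normal_density (\<mu> k) \<sigma>))"

lemma sets_indep_normals [measurable_cong]: "sets (indep_normals I \<mu> \<sigma>) = sets (PiM I (\<lambda>_. borel))"
  unfolding indep_normals_def by (rule sets_PiM_cong) auto

lemma prob_space_indep_normals: "\<sigma> > 0 \<Longrightarrow> prob_space (indep_normals I \<mu> \<sigma>)"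
  unfolding indep_normals_def by (intro prob_space_PiM prob_space_normal_density)

lemma distr_indep_normals_component:
  assumes "\<sigma> > 0" "k \<in> I"
  shows "distr (indep_normals I \<mu> \<sigma>) borel (\<lambda>y. y k) = density lborel (normal_density (\<mu> k) \<sigma>)"
proof -
  have "distr (indep_normals I \<mu> \<sigma>) borel (\<lambda>y. y k)
      = distr (indep_normals I \<mu> \<sigma>) (density lborel (normal_density (\<mu> k) \<sigma>)) (\<lambda>y. y k)"
    by (rule distr_cong) auto
  also have "\<dots> = density lborel (normal_density (\<mu> k) \<sigma>)"
    unfolding indep_normals_def
    by (rule distr_PiM_component) (use assms prob_space_normal_density in auto)
  finally show ?thesis .
qed

lemma indep_vars_indep_normals:
  assumes "\<sigma> > 0" "I \<noteq> {}"
  shows "prob_space.indep_vars (indep_normals I \<mu> \<sigma>) (\<lambda>_. borel) (\<lambda>k y. y k) I"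
proof -
  interpret prob_space "indep_normals I \<mu> \<sigma>"
    using assms(1) by (rule prob_space_indep_normals)
  have "distr (indep_normals I \<mu> \<sigma>) (PiM I (\<lambda>_. borel)) (\<lambda>y. \<lambda>k\<in>I. y k)
      = distr (indep_normals I \<mu> \<sigma>) (PiM I (\<lambda>_. borel)) (\<lambda>y. y)"
    by (rule distr_cong) (auto simp: space_PiM indep_normals_def PiE_def extensional_restrict)
  also have "\<dots> = indep_normals I \<mu> \<sigma>"
    by (rule distr_id2) (simp add: sets_indep_normals)
  also have "\<dots> = PiM I (\<lambda>k. density lborel (normal_density (\<mu> k) \<sigma>))"
    by (rule indep_normals_def)
  also have "\<dots> = PiM I (\<lambda>k. distr (indep_normals I \<mu> \<sigma>) borel (\<lambda>y. y k))"
    using assms(1) by (intro PiM_cong) (simp_all add: distr_indep_normals_component)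
  finally show ?thesis
    using assms(2) by (subst indep_vars_iff_distr_eq_PiM') auto
qed

lemma distributed_indep_normals_unit_combination:
  assumes "finite I" "\<sigma> > 0" and w: "(\<Sum>k\<in>I. (w k)\<^sup>2) = 1"
  shows "distributed (indep_normals I \<mu> \<sigma>) lborel (\<lambda>y. \<Sum>k\<in>I. w k * y k)
           (normal_density (\<Sum>k\<in>I. w k * \<mu> k) \<sigma>)"
proof -
  interpret prob_space "indep_normals I \<mu> \<sigma>"
    using assms(2) by (rule prob_space_indep_normals)
  define K where "K = {k\<in>I. w k \<noteq> 0}"
  have sum_K: "(\<Sum>k\<in>K. f k) = (\<Sum>k\<in>I. f k)" if "\<And>k. w k = 0 \<Longrightarrow> f k = 0" for f :: "_ \<Rightarrow> real"
    unfolding K_def using assms(1) that by (intro sum.mono_neutral_left) auto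
  have "K \<noteq> {}" using w sum_K[of "\<lambda>k. (w k)\<^sup>2"] by auto
  then have "I \<noteq> {}" by (auto simp: K_def)
  have "indep_vars (\<lambda>_. borel) (\<lambda>k y. w k * y k) K"
    using indep_vars_subset[OF indep_vars_compose2[OF indep_vars_indep_normals[OF assms(2) \<open>I \<noteq> {}\<close>],
          of "\<lambda>k x. w k * x" "\<lambda>_. borel"]]
    by (simp add: K_def)
  moreover have "distributed (indep_normals I \<mu> \<sigma>) lborel (\<lambda>y. w k * y k)
      (normal_density (w k * \<mu> k) (\<bar>w k\<bar> * \<sigma>))" if "k \<in> K" for k
  proof -
    have "distributed (indep_normals I \<mu> \<sigma>) lborel (\<lambda>y. y k) (normal_density (\<mu> k) \<sigma>)"
      using that assms(2) distr_indep_normals_component[of \<sigma> k I \<mu>]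
      by (auto simp: distributed_def K_def distr_cong[OF refl sets_lborel[symmetric]])
    then show ?thesis
      using normal_density_affine[of "\<lambda>y. y k" "\<mu> k" \<sigma> "w k" 0] that assms(2) by (simp add: K_def)
  qed
  ultimately have "distributed (indep_normals I \<mu> \<sigma>) lborel (\<lambda>y. \<Sum>k\<in>K. w k * y k)
      (normal_density (\<Sum>k\<in>K. w k * \<mu> k) (sqrt (\<Sum>k\<in>K. (\<bar>w k\<bar> * \<sigma>)\<^sup>2)))"
    using assms \<open>K \<noteq> {}\<close> by (intro sum_indep_normal) (auto simp: K_def)
  moreover have "sqrt (\<Sum>k\<in>K. (\<bar>w k\<bar> * \<sigma>)\<^sup>2) = \<sigma>"
    using assms sum_K[of "\<lambda>k. (\<bar>w k\<bar> * \<sigma>)\<^sup>2"]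
    by (simp add: power_mult_distrib sum_distrib_right[symmetric])
  ultimately show ?thesis
    using sum_K[of "\<lambda>k. w k * \<mu> k"] sum_K[of "\<lambda>k. w k * _ k"] by simp
qed

lemma normal_density_le: "\<sigma> > 0 \<Longrightarrow> normal_density \<mu> \<sigma> x \<le> 1 / (\<sigma> * sqrt (2 * pi))"
  unfolding normal_density_def
  by (simp add: real_sqrt_mult divide_right_mono mult.commute)

lemma emeasure_indep_normals_slab_le:
  assumes "finite I" "\<sigma> > 0" "(\<Sum>k\<in>I. (w k)\<^sup>2) = 1" "\<delta> \<ge> 0"
  shows "emeasure (indep_normals I \<mu> \<sigma>) {y \<in> space (indep_normals I \<mu> \<sigma>). \<bar>\<Sum>k\<in>I. w k * y k\<bar> < \<delta>}
           \<le> ennreal (2 * \<delta> / (\<sigma> * sqrt (2 * pi)))"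
proof -
  define c where "c = 1 / (\<sigma> * sqrt (2 * pi))"
  have "{y \<in> space (indep_normals I \<mu> \<sigma>). \<bar>\<Sum>k\<in>I. w k * y k\<bar> < \<delta>}
      = (\<lambda>y. \<Sum>k\<in>I. w k * y k) -` {-\<delta><..<\<delta>} \<inter> space (indep_normals I \<mu> \<sigma>)"
    by (auto simp: abs_less_iff)
  also have "emeasure (indep_normals I \<mu> \<sigma>) \<dots>
      = (\<integral>\<^sup>+x. ennreal (normal_density (\<Sum>k\<in>I. w k * \<mu> k) \<sigma> x) * indicator {-\<delta><..<\<delta>} x \<partial>lborel)"
    by (rule distributed_emeasure[OF distributed_indep_normals_unit_combination[OF assms(1-3)]]) simp
  also have "\<dots> \<le> (\<integral>\<^sup>+x. ennreal c * indicator {-\<delta><..<\<delta>} x \<partial>lborel)"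
    using normal_density_le[OF assms(2)]
    by (intro nn_integral_mono) (auto split: split_indicator intro!: ennreal_leI simp: c_def)
  also have "\<dots> = ennreal c * ennreal (2 * \<delta>)"
    using assms(4) by (simp add: nn_integral_cmult_indicator)
  also have "\<dots> = ennreal (2 * \<delta> / (\<sigma> * sqrt (2 * pi)))"
    using assms(2,4) by (simp add: c_def ennreal_mult'[symmetric])
  finally show ?thesis .
qed

lemma nn_integral_normal_sq_dev:
  assumes "\<sigma> > 0"
  shows "(\<integral>\<^sup>+x. ennreal ((x - \<mu>)\<^sup>2) \<partial>density lborel (normal_density \<mu> \<sigma>)) = ennreal (\<sigma>\<^sup>2)"
proof -
  have "(\<integral>\<^sup>+x. ennreal ((x - \<mu>)\<^sup>2) \<partial>density lborel (normal_density \<mu> \<sigma>))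
      = (\<integral>\<^sup>+x. ennreal (normal_density \<mu> \<sigma> x * (x - \<mu>) ^ (2 * 1)) \<partial>lborel)"
    \<comment> \<open>the exponent \<open>2 * 1\<close> matches the library's even moments \<open>2 * k\<close>\<close>
    by (subst nn_integral_density) (auto simp: ennreal_mult'[symmetric] intro!: nn_integral_cong)
  also have "\<dots> = ennreal (\<integral>x. normal_density \<mu> \<sigma> x * (x - \<mu>) ^ (2 * 1) \<partial>lborel)"
    using integrable_normal_moment[OF assms, of \<mu> 2] by (intro nn_integral_eq_integral) auto
  also have "(\<integral>x. normal_density \<mu> \<sigma> x * (x - \<mu>) ^ (2 * 1) \<partial>lborel) = \<sigma>\<^sup>2"
    using integral_normal_moment_even[OF assms, of \<mu> 1] assms by (simp add: power2_eq_square)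
  finally show ?thesis .
qed

lemma emeasure_indep_normals_sum_sq_dev_gt_le:
  assumes "finite I" "\<sigma> > 0" "t > 0"
  shows "emeasure (indep_normals I \<mu> \<sigma>) {y \<in> space (indep_normals I \<mu> \<sigma>). t < (\<Sum>k\<in>I. (y k - \<mu> k)\<^sup>2)}
           \<le> ennreal (real (card I) * \<sigma>\<^sup>2 / t)"
proof -
  let ?M = "indep_normals I \<mu> \<sigma>"
  define u where "u y = ennreal (\<Sum>k\<in>I. (y k - \<mu> k)\<^sup>2)" for y :: "_ \<Rightarrow> real"
  have [measurable]: "(\<lambda>y. y k) \<in> borel_measurable ?M" if "k \<in> I" for k
    using that by measurable
  have "emeasure ?M {y \<in> space ?M. t < (\<Sum>k\<in>I. (y k - \<mu> k)\<^sup>2)}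
      \<le> emeasure ?M {y \<in> space ?M. 1 \<le> ennreal (1 / t) * u y}"
    using assms(3) unfolding u_def
    by (intro emeasure_mono)
       (auto simp: field_simps ennreal_mult'[symmetric] sum_nonneg simp flip: ennreal_1)
  also have "\<dots> \<le> ennreal (1 / t) * (\<integral>\<^sup>+y. u y * indicator (space ?M) y \<partial>?M)"
    unfolding u_def by (intro nn_integral_Markov_inequality) measurable
  also have "(\<integral>\<^sup>+y. u y * indicator (space ?M) y \<partial>?M) = (\<Sum>k\<in>I. \<integral>\<^sup>+y. ennreal ((y k - \<mu> k)\<^sup>2) \<partial>?M)"
    unfolding u_def
    by (subst nn_integral_sum[symmetric]) (auto intro!: nn_integral_cong simp: sum_nonneg)
  also have "\<dots> = (\<Sum>k\<in>I. ennreal (\<sigma>\<^sup>2))"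
  proof (rule sum.cong[OF refl])
    fix k assume "k \<in> I"
    have "(\<integral>\<^sup>+y. ennreal ((y k - \<mu> k)\<^sup>2) \<partial>?M)
        = (\<integral>\<^sup>+x. ennreal ((x - \<mu> k)\<^sup>2) \<partial>distr ?M borel (\<lambda>y. y k))"
      using \<open>k \<in> I\<close> by (subst nn_integral_distr) auto
    also have "\<dots> = ennreal (\<sigma>\<^sup>2)"
      using \<open>k \<in> I\<close> assms(2)
      by (simp add: distr_indep_normals_component nn_integral_normal_sq_dev)
    finally show "(\<integral>\<^sup>+y. ennreal ((y k - \<mu> k)\<^sup>2) \<partial>?M) = ennreal (\<sigma>\<^sup>2)" .
  qed
  finally show ?thesis
    using assms(3) by (simp add: ennreal_mult'[symmetric] ennreal_of_nat_eq_real_of_nat mult.commute)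
qed

section \<open>Gaussian matrices\<close>

definition matrix_of_fun :: "('m \<times> 'n \<Rightarrow> 'a) \<Rightarrow> 'a^'n^'m" where
  "matrix_of_fun f = (\<chi> i j. f (i, j))"

lemma measurable_matrix_of_fun [measurable]:
  "matrix_of_fun \<in> borel_measurable (PiM UNIV (\<lambda>_. borel) :: ('m::finite \<times> 'n::finite \<Rightarrow> real) measure)"
proof -
  have "continuous_on UNIV (matrix_of_fun :: ('m \<times> 'n \<Rightarrow> real) \<Rightarrow> real^'n^'m)"
    unfolding matrix_of_fun_def by (intro continuous_intros continuous_on_product_coordinates)
  then show ?thesis
    by (subst measurable_cong_sets[OF sets_PiM_equal_borel refl]) (rule borel_measurable_continuous_onI)
qed

lemma gaussian_matrix_eq_distr:
  "gaussian_matrix Abar \<sigma> = distr (indep_normals UNIV (\<lambda>ij. Abar $ fst ij $ snd ij) \<sigma>) borel matrix_of_fun"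
  unfolding gaussian_matrix_def indep_normals_def matrix_of_fun_def ..

lemma sets_gaussian_matrix [simp]: "sets (gaussian_matrix Abar \<sigma>) = sets borel"
  unfolding gaussian_matrix_eq_distr by simp

lemma prob_space_gaussian_matrix: "\<sigma> > 0 \<Longrightarrow> prob_space (gaussian_matrix Abar \<sigma>)"
  unfolding gaussian_matrix_eq_distr
  by (intro prob_space.prob_space_distr prob_space_indep_normals) measurable

lemma measure_gaussian_matrix:
  assumes "S \<in> sets borel"
  shows "measure (gaussian_matrix Abar \<sigma>) S
       = measure (indep_normals UNIV (\<lambda>ij. Abar $ fst ij $ snd ij) \<sigma>)
           {f \<in> space (indep_normals UNIV (\<lambda>ij. Abar $ fst ij $ snd ij) \<sigma>). matrix_of_fun f \<in> S}"
  unfolding gaussian_matrix_eq_distr using assms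
  by (subst measure_distr) (auto intro!: arg_cong2[where f = measure])

lemma measure_gaussian_matrix_norm_dev_gt_le:
  fixes Abar :: "real^'n^'m"
  assumes "\<sigma> > 0" "t > 0"
  shows "measure (gaussian_matrix Abar \<sigma>) {A. t < (norm (A - Abar))\<^sup>2}
           \<le> real CARD('m) * real CARD('n) * \<sigma>\<^sup>2 / t"
proof -
  let ?\<mu> = "\<lambda>ij. Abar $ fst ij $ snd ij"
  let ?M = "indep_normals UNIV ?\<mu> \<sigma>"
  interpret prob_space ?M using assms(1) by (rule prob_space_indep_normals)
  have "open {A. t < (norm (A - Abar))\<^sup>2}"
    by (intro open_Collect_less continuous_intros)
  moreover have "(norm (matrix_of_fun f - Abar))\<^sup>2 = (\<Sum>ij\<in>UNIV. (f ij - ?\<mu> ij)\<^sup>2)" for f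
  proof -
    have "(norm (matrix_of_fun f - Abar))\<^sup>2 = (\<Sum>i\<in>UNIV. \<Sum>j\<in>UNIV. (f (i, j) - Abar $ i $ j)\<^sup>2)"
      by (simp add: norm_matrix_sq matrix_of_fun_def)
    then show ?thesis by (simp add: sum.cartesian_product case_prod_unfold)
  qed
  ultimately have "measure (gaussian_matrix Abar \<sigma>) {A. t < (norm (A - Abar))\<^sup>2}
      = measure ?M {f \<in> space ?M. t < (\<Sum>ij\<in>UNIV. (f ij - ?\<mu> ij)\<^sup>2)}"
    by (simp add: measure_gaussian_matrix)
  also have "\<dots> \<le> card (UNIV :: ('m \<times> 'n) set) * \<sigma>\<^sup>2 / t"
    using emeasure_indep_normals_sum_sq_dev_gt_le[of UNIV \<sigma> t ?\<mu>] assms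
    by (simp add: emeasure_eq_measure)
  finally show ?thesis by simp
qed

lemma sum_row_entries:
  fixes f :: "'m \<times> 'n::finite \<Rightarrow> 'a::comm_monoid_add"
  shows "(\<Sum>ij\<in>{ij. fst ij = i}. f ij) = (\<Sum>j\<in>UNIV. f (i, j))"
proof -
  have row: "{ij. fst ij = i} = Pair i ` UNIV" by auto
  show ?thesis unfolding row by (simp add: sum.reindex inj_on_def)
qed

lemma sets_not_row_separated:
  fixes \<mu> :: "'m::finite \<times> 'n::finite \<Rightarrow> real"
  shows "{f \<in> space (indep_normals UNIV \<mu> \<sigma>). \<not> row_separated \<delta> i (matrix_of_fun f)}
           \<in> sets (indep_normals UNIV \<mu> \<sigma>)"
proof -
  have "{A::real^'n^'m. \<not> row_separated \<delta> i A} \<in> sets borel"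
    by (intro borel_open open_Collect_neg closed_row_separated)
  then have "matrix_of_fun -` {A. \<not> row_separated \<delta> i A} \<inter> space (indep_normals UNIV \<mu> \<sigma>)
      \<in> sets (indep_normals UNIV \<mu> \<sigma>)"
    by (rule measurable_sets[rotated]) measurable
  then show ?thesis by (simp add: vimage_def Int_def conj_commute)
qed

lemma emeasure_indep_normals_not_row_separated_le:
  fixes \<mu> :: "'m::finite \<times> 'n::finite \<Rightarrow> real"
  assumes "CARD('m) \<le> CARD('n)" "\<sigma> > 0" "\<delta> > 0"
  shows "emeasure (indep_normals UNIV \<mu> \<sigma>)
           {f \<in> space (indep_normals UNIV \<mu> \<sigma>). \<not> row_separated \<delta> i (matrix_of_fun f)}
         \<le> ennreal (2 * \<delta> / (\<sigma> * sqrt (2 * pi)))"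
proof -
  let ?N = "\<lambda>ij. density lborel (normal_density (\<mu> ij) \<sigma>)"
  define J where "J = {ij :: 'm \<times> 'n. fst ij \<noteq> i}"
  define I where "I = {ij :: 'm \<times> 'n. fst ij = i}"
  have JI: "J \<union> I = UNIV" "J \<inter> I = {}" unfolding J_def I_def by auto
  have M: "indep_normals UNIV \<mu> \<sigma> = PiM (J \<union> I) ?N" unfolding JI indep_normals_def ..
  define B where "B = {f \<in> space (indep_normals UNIV \<mu> \<sigma>). \<not> row_separated \<delta> i (matrix_of_fun f)}"
  have B: "B \<in> sets (PiM (J \<union> I) ?N)" unfolding B_def M[symmetric] by (rule sets_not_row_separated)
  have "emeasure (PiM (J \<union> I) ?N) B \<le> ennreal (2 * \<delta> / (\<sigma> * sqrt (2 * pi)))"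
  proof (rule emeasure_PiM_le_if_sections_le[OF _ JI(2) _ _ B])
    fix x :: "'m \<times> 'n \<Rightarrow> real"
    obtain u where u: "norm u = 1" "\<And>k. k \<noteq> i \<Longrightarrow> matrix_of_fun x $ k \<bullet> u = 0"
      using exists_unit_orthogonal_to_other_rows[OF assms(1)] by blast
    let ?MI = "indep_normals I \<mu> \<sigma>"
    let ?slab = "{y \<in> space ?MI. \<bar>\<Sum>ij\<in>I. u $ snd ij * y ij\<bar> < \<delta>}"
    have "(\<lambda>y. merge J I (x, y)) -` B \<inter> space ?MI \<subseteq> ?slab"
    proof safe
      fix y assume "merge J I (x, y) \<in> B"
      define A where "A = matrix_of_fun (merge J I (x, y))"
      have "A $ k = matrix_of_fun x $ k" if "k \<noteq> i" for k
        using that by (simp add: A_def matrix_of_fun_def merge_def J_def vec_eq_iff)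
      moreover have "\<not> row_separated \<delta> i A"
        using \<open>merge J I (x, y) \<in> B\<close> by (simp add: A_def B_def)
      ultimately have "\<bar>A $ i \<bullet> u\<bar> < \<delta>"
        using u unfolding row_separated_def by force
      moreover have "A $ i = (\<chi> j. y (i, j))"
        by (simp add: A_def matrix_of_fun_def merge_def J_def I_def vec_eq_iff)
      then have "A $ i \<bullet> u = (\<Sum>ij\<in>I. u $ snd ij * y ij)"
        by (simp add: I_def sum_row_entries inner_vec_def mult.commute)
      ultimately show "\<bar>\<Sum>ij\<in>I. u $ snd ij * y ij\<bar> < \<delta>" by simp
    qed
    moreover have "?slab \<in> sets ?MI" by measurable
    ultimately have "emeasure ?MI ((\<lambda>y. merge J I (x, y)) -` B \<inter> space ?MI) \<le> emeasure ?MI ?slab"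
      by (rule emeasure_mono)
    also have "\<dots> \<le> ennreal (2 * \<delta> / (\<sigma> * sqrt (2 * pi)))"
      using u(1) assms(2,3)
      by (intro emeasure_indep_normals_slab_le) (simp_all add: I_def sum_row_entries flip: norm_vec_sq)
    finally show "emeasure (PiM I ?N) ((\<lambda>y. merge J I (x, y)) -` B \<inter> space (PiM I ?N))
        \<le> ennreal (2 * \<delta> / (\<sigma> * sqrt (2 * pi)))"
      unfolding indep_normals_def .
  qed (use assms(2) prob_space_normal_density in auto)
  then show ?thesis unfolding B_def M .
qed

lemma measure_gaussian_matrix_not_row_separated_le:
  fixes Abar :: "real^'n^'m"
  assumes "CARD('m) \<le> CARD('n)" "\<sigma> > 0" "\<delta> > 0"
  shows "measure (gaussian_matrix Abar \<sigma>) {A. \<not> row_separated \<delta> i A} \<le> 2 * \<delta> / (\<sigma> * sqrt (2 * pi))"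
proof -
  let ?M = "indep_normals UNIV (\<lambda>ij. Abar $ fst ij $ snd ij) \<sigma>"
  interpret prob_space ?M using assms(2) by (rule prob_space_indep_normals)
  have "{A::real^'n^'m. \<not> row_separated \<delta> i A} \<in> sets borel"
    by (intro borel_open open_Collect_neg closed_row_separated)
  then show ?thesis
    using emeasure_indep_normals_not_row_separated_le[OF assms, where \<mu> = "\<lambda>ij. Abar $ fst ij $ snd ij" and i = i]
      assms(2,3)
    by (simp add: measure_gaussian_matrix emeasure_eq_measure)
qed

lemma failure_probability_le:
  fixes n m \<sigma> :: real
  assumes "1 \<le> n" "0 \<le> m" "m \<le> n" "\<sigma> > 0"
  shows "m * n * \<sigma>\<^sup>2 / (49 * \<sigma>\<^sup>2 * n ^ 3) + m * (2 * (\<sigma> / (exp 1 * n * sqrt n)) / (\<sigma> * sqrt (2 * pi)))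
           \<le> 1 / sqrt n"
proof -
  have "1 \<le> sqrt n" using assms(1) by simp
  then have "sqrt n * 1 \<le> sqrt n * sqrt n" by (intro mult_left_mono) auto
  then have "sqrt n \<le> n" using assms(1) by simp
  have "m * n * \<sigma>\<^sup>2 / (49 * \<sigma>\<^sup>2 * n ^ 3) = (m / n) * (1 / 49) * (1 / n)"
    using assms by (simp add: field_simps power3_eq_cube power2_eq_square)
  also have "\<dots> \<le> 1 * (1 / 49) * (1 / sqrt n)"
    using assms \<open>1 \<le> sqrt n\<close> \<open>sqrt n \<le> n\<close> by (intro mult_mono frac_le) auto
  finally have first: "m * n * \<sigma>\<^sup>2 / (49 * \<sigma>\<^sup>2 * n ^ 3) \<le> (1 / 49) * (1 / sqrt n)" by simp
  have "4 \<le> exp 1 * sqrt (2 * pi)"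
    using mult_mono[OF exp_ge_add_one_self[of 1] real_le_rsqrt[of 2 "2 * pi"]] pi_gt3 by simp
  then have "2 / (exp 1 * sqrt (2 * pi)) \<le> 1 / 2" by (simp add: field_simps)
  then have "(m / n) * (2 / (exp 1 * sqrt (2 * pi))) * (1 / sqrt n) \<le> 1 * (1 / 2) * (1 / sqrt n)"
    using assms by (intro mult_mono) auto
  moreover have "m * (2 * (\<sigma> / (exp 1 * n * sqrt n)) / (\<sigma> * sqrt (2 * pi)))
      = (m / n) * (2 / (exp 1 * sqrt (2 * pi))) * (1 / sqrt n)"
    using assms by (simp add: field_simps)
  moreover have "0 \<le> 1 / sqrt n" using assms(1) by simp
  ultimately show ?thesis using first by linarith
qed

lemma kappa_F_le_if_rows_separated_at_scale:
  fixes A Abar :: "real^'n^'m"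
  assumes "CARD('m) \<le> CARD('n)" "\<sigma> > 0"
    and "(norm (A - Abar))\<^sup>2 \<le> 49 * \<sigma>\<^sup>2 * real CARD('n) ^ 3"
    and "\<And>i. row_separated (\<sigma> / (exp 1 * real CARD('n) * sqrt (real CARD('n)))) i A"
  shows "kappa_F A \<le> 98 * \<sigma>\<^sup>2 * real CARD('n) ^ 3 + 2 * real CARD('n) * (spec_norm Abar)\<^sup>2
                      + exp 2 * real CARD('n) ^ 4 / \<sigma>\<^sup>2"
proof -
  let ?n = "real CARD('n)" and ?m = "real CARD('m)"
  define \<delta> where "\<delta> = \<sigma> / (exp 1 * ?n * sqrt ?n)"
  have "exp 2 = exp 1 * exp (1::real)" by (simp flip: exp_add)
  then have "(exp 1 * ?n * sqrt ?n)\<^sup>2 = exp 2 * ?n ^ 3"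
    by (simp add: power_mult_distrib power2_eq_square power3_eq_cube)
  then have "?m / \<delta>\<^sup>2 = ?m * exp 2 * ?n ^ 3 / \<sigma>\<^sup>2"
    by (simp add: \<delta>_def power_divide)
  also have "\<dots> \<le> exp 2 * ?n ^ 4 / \<sigma>\<^sup>2"
    using assms(1) by (simp add: divide_right_mono power_numeral_reduce)
  finally show ?thesis
    using kappa_F_le_if_rows_separated[of \<delta> A Abar] assms(2-4) by (simp add: \<delta>_def)
qed

theorem theorem6p5:
  fixes Abar :: "real^'n^'m" and \<sigma> :: real
  assumes "CARD('m) \<le> CARD('n)" and "\<sigma> > 0"
  shows "measure (gaussian_matrix Abar \<sigma>)
           {A. kappa_F A \<le> 98 * \<sigma>\<^sup>2 * real CARD('n) ^ 3 + 2 * real CARD('n) * (spec_norm Abar)\<^sup>2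
                          + exp 2 * real CARD('n) ^ 4 / \<sigma>\<^sup>2}
         \<ge> 1 - (1 / sqrt (real CARD('n)) + exp (- 2 * real CARD('n) / pi\<^sup>2))"
proof -
  let ?n = "real CARD('n)" and ?m = "real CARD('m)"
  interpret G: prob_space "gaussian_matrix Abar \<sigma>"
    using assms(2) by (rule prob_space_gaussian_matrix)
  define c where "c = 98 * \<sigma>\<^sup>2 * ?n ^ 3 + 2 * ?n * (spec_norm Abar)\<^sup>2 + exp 2 * ?n ^ 4 / \<sigma>\<^sup>2"
  define \<delta> where "\<delta> = \<sigma> / (exp 1 * ?n * sqrt ?n)"
  define B where "B = {A. 49 * \<sigma>\<^sup>2 * ?n ^ 3 < (norm (A - Abar))\<^sup>2}"
  define C where "C i = {A::real^'n^'m. \<not> row_separated \<delta> i A}" for i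
  have "\<delta> > 0" "?m \<le> ?n" "1 \<le> ?n" using assms by (simp_all add: \<delta>_def Suc_leI)
  have "space (gaussian_matrix Abar \<sigma>) - {A. kappa_F A \<le> c} \<subseteq> B \<union> (\<Union>i\<in>UNIV. C i)"
    using kappa_F_le_if_rows_separated_at_scale[OF assms] by (fastforce simp: B_def C_def c_def \<delta>_def)
  moreover have "B \<in> sets borel" "C i \<in> sets borel" "{A. kappa_F A \<le> c} \<in> sets borel" for i
    unfolding B_def C_def
    by (intro borel_open borel_closed open_Collect_less open_Collect_neg continuous_intros
          closed_row_separated closed_kappa_F_le)+
  ultimately have "1 - (G.prob B + (\<Sum>i\<in>UNIV. G.prob (C i))) \<le> G.prob {A. kappa_F A \<le> c}"
    by (intro G.prob_ge_1_minus_union_bound) simp_all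
  moreover have "G.prob B \<le> ?m * ?n * \<sigma>\<^sup>2 / (49 * \<sigma>\<^sup>2 * ?n ^ 3)"
    unfolding B_def using assms(2) by (intro measure_gaussian_matrix_norm_dev_gt_le) simp_all
  moreover have "G.prob (C i) \<le> 2 * \<delta> / (\<sigma> * sqrt (2 * pi))" for i
    unfolding C_def by (rule measure_gaussian_matrix_not_row_separated_le[OF assms \<open>\<delta> > 0\<close>])
  then have "(\<Sum>i\<in>UNIV. G.prob (C i)) \<le> ?m * (2 * \<delta> / (\<sigma> * sqrt (2 * pi)))"
    using sum_mono[of UNIV "\<lambda>i. G.prob (C i)" "\<lambda>_. 2 * \<delta> / (\<sigma> * sqrt (2 * pi))"] by simp
  ultimately have "1 - 1 / sqrt ?n \<le> G.prob {A. kappa_F A \<le> c}"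
    using failure_probability_le[OF \<open>1 \<le> ?n\<close> _ \<open>?m \<le> ?n\<close> assms(2)] unfolding \<delta>_def by linarith
  then show ?thesis
    using exp_ge_zero[of "- 2 * ?n / pi\<^sup>2"] unfolding c_def by linarith
qed

end
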